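(* Let $n\geq 2$. Then $C(r_{1/n})=P_n\rtimes\mathcal{E}^n_\Delta$; that is, $P_n$ is a normal subgroup of $C(r_{1/n})$, $P_n\cap\mathcal{E}^n_\Delta$ is trivial, and $C(r_{1/n})=P_n\cdot\mathcal{E}^n_\Delta$.
   Context: Identify $\mathbb{T}^1=\mathbb{R}/\mathbb{Z}$ with $[0,1)$. An interval exchange transformation is a bijection of $\mathbb{T}^1$ that is a translation on each piece of some partition of $[0,1)$ into finitely many half-open intervals $[a,b)$; $\mathcal{E}$ is the group of these. $C(f)=\{g\in\mathcal{E}:fg=gf\}$. $r_{1/n}(x)=x+1/n$. Let $I_i=[\frac{i-1}{n},\frac{i}{n})$, $1\le i\le n$. $\mathcal{E}^n_\Delta=\{g\in C(r_{1/n}): g(I_i)=I_i \text{ for } 1\le i\le n\}$. $P_n=\{g\in C(r_{1/n}):$ for every $x\in\mathbb{T}^1$ there is $k\in\mathbb{Z}$ with $g(x)=x+k/n \pmod 1\}$. *)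

theory Defs
  imports Complex_Main "HOL-Algebra.Coset"
begin

text \<open>Points of the circle T^1 = R/Z are identified with [0,1).  A map of the circle is
  represented by a function real => real which acts on [0,1) and is the identity outside
  [0,1) (so that equality and composition of maps are the HOL ones).\<close>

definition IET :: "(real \<Rightarrow> real) \<Rightarrow> bool" where
  "IET f \<longleftrightarrow>
     bij_betw f {0..<1} {0..<1} \<and>
     (\<forall>x. x \<notin> {0..<1} \<longrightarrow> f x = x) \<and>
     (\<exists>(k::nat) (a::nat \<Rightarrow> real) (c::nat \<Rightarrow> real).
        a 0 = 0 \<and> a k = 1 \<and> (\<forall>i<k. a i < a (Suc i)) \<and>
        (\<forall>i<k. \<forall>x. a i \<le> x \<and> x < a (Suc i) \<longrightarrow> f x = frac (x + c i)))"

definition IET_group :: "(real \<Rightarrow> real) monoid" where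
  "IET_group = \<lparr>carrier = {f. IET f}, mult = (\<circ>), one = id\<rparr>"

definition centralizer :: "(real \<Rightarrow> real) \<Rightarrow> (real \<Rightarrow> real) set" where
  "centralizer f = {g. IET g \<and> f \<circ> g = g \<circ> f}"

definition centralizer_group :: "(real \<Rightarrow> real) \<Rightarrow> (real \<Rightarrow> real) monoid" where
  "centralizer_group f = \<lparr>carrier = centralizer f, mult = (\<circ>), one = id\<rparr>"

definition rot :: "nat \<Rightarrow> real \<Rightarrow> real" where
  "rot n x = (if x \<in> {0..<1} then frac (x + 1 / real n) else x)"

definition Iint :: "nat \<Rightarrow> nat \<Rightarrow> real set" where
  "Iint n i = {(real i - 1) / real n ..< real i / real n}"

definition E_Delta :: "nat \<Rightarrow> (real \<Rightarrow> real) set" where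
  "E_Delta n = {g \<in> centralizer (rot n). \<forall>i\<in>{1..n}. g ` Iint n i = Iint n i}"

definition P_set :: "nat \<Rightarrow> (real \<Rightarrow> real) set" where
  "P_set n = {g \<in> centralizer (rot n).
      \<forall>x\<in>{0..<1}. \<exists>k::int. g x = frac (x + real_of_int k / real n)}"

end

theory Submission
  imports Defs
begin

text \<open>Write a point of [0,1) as i/n + \<rho> with cell index 0 \<le> i < n and offset 0 \<le> \<rho> < 1/n.
  The orbits of r_(1/n) are exactly the offset classes, so every g commuting with r_(1/n)
  permutes them; P_n consists of the g fixing every class, hence is normal (it is the kernel of
  this action).  For arbitrary g, the map sending x to the point in the cell of x with the offset
  of g x lies in E^n_Delta, and g composed with its inverse preserves offsets.  An element of
  both P_n and E^n_Delta preserves cells and offsets, so it is the identity.  That all these maps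
  are interval exchanges follows from the characterisation of IETs as the bijections of [0,1)
  that are translations off a finite set of break points, a property stable under composition
  and inversion.\<close>

section \<open>Step functions on [0,1)\<close>

definition step_breaks :: "real set \<Rightarrow> (real \<Rightarrow> 'a) \<Rightarrow> bool" where
  "step_breaks F h \<longleftrightarrow>
     (\<forall>x y. 0 \<le> x \<longrightarrow> x \<le> y \<longrightarrow> y < 1 \<longrightarrow> F \<inter> {x<..y} = {} \<longrightarrow> h y = h x)"

lemma step_breaksI:
  "(\<And>x y. 0 \<le> x \<Longrightarrow> x \<le> y \<Longrightarrow> y < 1 \<Longrightarrow> F \<inter> {x<..y} = {} \<Longrightarrow> h y = h x) \<Longrightarrow> step_breaks F h"
  unfolding step_breaks_def by blast

lemma step_breaksD:
  "step_breaks F h \<Longrightarrow> 0 \<le> x \<Longrightarrow> x \<le> y \<Longrightarrow> y < 1 \<Longrightarrow> F \<inter> {x<..y} = {} \<Longrightarrow> h y = h x"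
  unfolding step_breaks_def by blast

lemma step_breaks_cong:
  assumes "\<And>x. x \<in> {0..<1} \<Longrightarrow> h x = k x" "step_breaks F h"
  shows "step_breaks F k"
proof (rule step_breaksI)
  fix x y :: real
  assume xy: "0 \<le> x" "x \<le> y" "y < 1" "F \<inter> {x<..y} = {}"
  then have "h y = h x" by (rule step_breaksD[OF assms(2)])
  then show "k y = k x" using assms(1)[of x] assms(1)[of y] xy by simp
qed

lemma step_breaks_combine:
  assumes "step_breaks F h" "step_breaks G k"
  shows "step_breaks (F \<union> G) (\<lambda>x. \<phi> (h x) (k x))"
proof (rule step_breaksI)
  fix x y :: real
  assume x: "0 \<le> x" "x \<le> y" "y < 1" and "(F \<union> G) \<inter> {x<..y} = {}"
  then have "F \<inter> {x<..y} = {}" "G \<inter> {x<..y} = {}" by blast+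
  then show "\<phi> (h y) (k y) = \<phi> (h x) (k x)"
    using step_breaksD[OF assms(1) x] step_breaksD[OF assms(2) x] by simp
qed

lemma step_breaks_comp:
  assumes g: "step_breaks G (\<lambda>x. g x - x)" and g_into: "\<And>x. x \<in> {0..<1} \<Longrightarrow> g x \<in> {0..<1}"
    and h: "step_breaks F h"
  shows "step_breaks (G \<union> (g -` F \<inter> {0..<1})) (\<lambda>x. h (g x))"
proof (rule step_breaksI)
  fix x y :: real
  assume x: "0 \<le> x" "x \<le> y" "y < 1" and no_break: "(G \<union> (g -` F \<inter> {0..<1})) \<inter> {x<..y} = {}"
  have shift: "g t = t + (g x - x)" if "x \<le> t" "t \<le> y" for t
  proof -
    have "{x<..t} \<subseteq> {x<..y}" using that by auto
    then have "G \<inter> {x<..t} = {}" using no_break by blast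
    then show ?thesis using step_breaksD[OF g, of x t] x that by simp
  qed
  have "F \<inter> {g x<..g y} = {}"
  proof (rule ccontr)
    assume "F \<inter> {g x<..g y} \<noteq> {}"
    then obtain b where b: "b \<in> F" "g x < b" "b \<le> g y" by auto
    define t where "t = b - (g x - x)"
    have t: "x < t" "t \<le> y" using b shift[of y] x unfolding t_def by auto
    have "g t = b" using shift[of t] t unfolding t_def by simp
    then have "t \<in> (g -` F \<inter> {0..<1}) \<inter> {x<..y}" using b(1) t x by simp
    then show False using no_break by blast
  qed
  moreover have "g x \<in> {0..<1}" "g y \<in> {0..<1}" using g_into x by auto
  moreover have "g x \<le> g y" using shift[of y] x by simp
  ultimately show "h (g y) = h (g x)" using step_breaksD[OF h, of "g x" "g y"] by simp
qed

lemma floor_eq_if_no_int_between: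
  fixes u v :: real
  assumes "u \<le> v" "\<And>m::int. \<not> (u < of_int m \<and> of_int m \<le> v)"
  shows "\<lfloor>u\<rfloor> = \<lfloor>v\<rfloor>"
proof -
  have "\<not> \<lfloor>u\<rfloor> < \<lfloor>v\<rfloor>"
  proof
    assume "\<lfloor>u\<rfloor> < \<lfloor>v\<rfloor>"
    then have "u < of_int \<lfloor>v\<rfloor>" by linarith
    then show False using assms(2)[of "\<lfloor>v\<rfloor>"] by linarith
  qed
  then show ?thesis using floor_mono[OF assms(1)] by linarith
qed

lemma finite_step_values:
  assumes "finite F" "step_breaks F h"
  shows "finite (h ` {0..<1})"
proof (rule finite_subset)
  show "h ` {0..<1} \<subseteq> h ` insert 0 (F \<inter> {0..<1})"
  proof
    fix y assume "y \<in> h ` {0..<1}"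
    then obtain x where x: "0 \<le> x" "x < 1" "y = h x" by auto
    define p where "p = Max (insert 0 (F \<inter> {0..x}))"
    have "p \<in> insert 0 (F \<inter> {0..x})" unfolding p_def using assms(1) by (intro Max_in) auto
    then have p: "0 \<le> p" "p \<le> x" "p \<in> insert 0 (F \<inter> {0..<1})" using x by auto
    have "b \<le> p" if "b \<in> F" "p < b" "b \<le> x" for b
      unfolding p_def using assms(1) that p by (intro Max_ge) auto
    then have "F \<inter> {p<..x} = {}" by force
    then have "h x = h p" using step_breaksD[OF assms(2) p(1,2)] x by simp
    then show "y \<in> h ` insert 0 (F \<inter> {0..<1})" using x p by blast
  qed
qed (use assms in simp)

lemma next_break:
  fixes x :: real
  assumes "finite F" "0 \<le> x" "x < 1"
  obtains q where "q \<in> insert 1 F" "x < q" "q \<le> 1" "\<And>t. t < q \<Longrightarrow> F \<inter> {x<..t} = {}"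
proof
  define q where "q = Min (insert 1 {b \<in> F. x < b})"
  have "q \<in> insert 1 {b \<in> F. x < b}" unfolding q_def using assms(1) by (intro Min_in) auto
  then show "q \<in> insert 1 F" "x < q" using assms by auto
  show "q \<le> 1" unfolding q_def using assms(1) by simp
  have "q \<le> b" if "b \<in> F" "x < b" for b
    unfolding q_def using assms(1) that by (intro Min_le) auto
  then show "F \<inter> {x<..t} = {}" if "t < q" for t
    using that by force
qed

section \<open>Interval exchanges as piecewise translations\<close>

definition piecewise_translation :: "(real \<Rightarrow> real) \<Rightarrow> bool" where
  "piecewise_translation g \<longleftrightarrow> (\<exists>F. finite F \<and> step_breaks F (\<lambda>x. g x - x))"

lemma piecewise_translationI:
  "finite F \<Longrightarrow> step_breaks F (\<lambda>x. g x - x) \<Longrightarrow> piecewise_translation g"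
  unfolding piecewise_translation_def by (intro exI conjI)

lemma piecewise_translationE:
  assumes "piecewise_translation g"
  obtains F where "finite F" "step_breaks F (\<lambda>x. g x - x)"
  using assms unfolding piecewise_translation_def by (elim exE conjE)

lemma ex_bracketing_index:
  fixes a :: "nat \<Rightarrow> 'a::linorder"
  assumes "a 0 \<le> x" "x < a k"
  shows "\<exists>i<k. a i \<le> x \<and> x < a (Suc i)"
  using assms(2)
proof (induction k)
  case 0
  then show ?case using assms(1) by simp
next
  case (Suc k)
  show ?case
  proof (cases "x < a k")
    case True
    then show ?thesis using Suc.IH less_SucI by blast
  next
    case False
    then show ?thesis using Suc.prems by (intro exI[of _ k]) simp
  qed
qed

text \<open>The break points of an IET are the partition points together with the preimage of 0,
  where a piece wraps around the circle.\<close>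
lemma IET_piecewise_translation:
  assumes "IET f" shows "piecewise_translation f"
proof -
  from assms obtain k a c where f: "bij_betw f {0..<1} {0..<1}"
    and a0: "a 0 = (0::real)" and ak: "a k = 1"
    and pieces: "\<forall>i<k. \<forall>x. a i \<le> x \<and> x < a (Suc i) \<longrightarrow> f x = frac (x + c i)"
    unfolding IET_def by blast
  define Z where "Z = f -` {0} \<inter> {0..<1}"
  have "finite Z"
    unfolding Z_def by (rule finite_vimage_IntI) (use bij_betw_imp_inj_on[OF f] in auto)
  have "step_breaks (a ` {..k} \<union> Z) (\<lambda>x. f x - x)"
  proof (rule step_breaksI)
    fix x y :: real
    assume x: "0 \<le> x" "x \<le> y" "y < 1" and no_break: "(a ` {..k} \<union> Z) \<inter> {x<..y} = {}"
    obtain i where i: "i < k" "a i \<le> x" "x < a (Suc i)"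
      using ex_bracketing_index[of a x k] a0 ak x by auto
    have "a (Suc i) \<in> a ` {..k}" using i(1) by simp
    then have "a (Suc i) \<notin> {x<..y}" using no_break by blast
    then have y: "y < a (Suc i)" using i by auto
    have on_piece: "f t = frac (t + c i)" if "x \<le> t" "t \<le> y" for t
    proof -
      have "a i \<le> t \<and> t < a (Suc i)" using i y that by linarith
      then show ?thesis using pieces i(1) by blast
    qed
    have "\<lfloor>x + c i\<rfloor> = \<lfloor>y + c i\<rfloor>"
    proof (rule floor_eq_if_no_int_between)
      fix m :: int
      show "\<not> (x + c i < of_int m \<and> of_int m \<le> y + c i)"
      proof
        assume m: "x + c i < of_int m \<and> of_int m \<le> y + c i"
        then have "f (of_int m - c i) = 0" using on_piece[of "of_int m - c i"] by simp
        moreover have "of_int m - c i \<in> {x<..y}" "of_int m - c i \<in> {0..<1}" using m x by auto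
        ultimately have "of_int m - c i \<in> Z \<inter> {x<..y}" unfolding Z_def by simp
        then show False using no_break by blast
      qed
    qed (use x in simp)
    then show "f y - y = f x - x" using on_piece[of x] on_piece[of y] x by (simp add: frac_def)
  qed
  moreover have "finite (a ` {..k} \<union> Z)" using \<open>finite Z\<close> by simp
  ultimately show ?thesis by (intro piecewise_translationI)
qed

lemma strict_sorted_nth_less_iff:
  fixes L :: "'a::linorder list"
  assumes "sorted_wrt (<) L" "i < length L" "j < length L"
  shows "L ! i < L ! j \<longleftrightarrow> i < j"
proof
  show "i < j" if "L ! i < L ! j"
  proof (cases i j rule: linorder_cases)
    case greater
    then show ?thesis using sorted_wrt_nth_less[OF assms(1), of j i] that assms by simp
  qed (use that in auto)
qed (use sorted_wrt_nth_less[OF assms(1)] assms in auto)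

lemma piecewise_translation_IET:
  assumes bij: "bij_betw f {0..<1} {0..<1}" and outside: "\<And>x. x \<notin> {0..<1} \<Longrightarrow> f x = x"
    and "piecewise_translation f"
  shows "IET f"
proof -
  obtain F where "finite F" and F: "step_breaks F (\<lambda>x. f x - x)"
    using assms(3) by (rule piecewise_translationE)
  define S where "S = insert 0 (insert 1 (F \<inter> {0<..<1::real}))"
  define L where "L = sorted_list_of_set S"
  have "finite S" unfolding S_def using \<open>finite F\<close> by simp
  then have set_L: "set L = S" unfolding L_def by simp
  have sorted_L: "sorted_wrt (<) L" unfolding L_def by (rule strict_sorted_list_of_set)
  define k where "k = length L - 1"
  define a where "a i = L ! i" for i
  define c where "c i = f (a i) - a i" for i
  have len_L: "length L = Suc k" unfolding k_def using set_L S_def by (cases L) auto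
  have a_less_iff: "a i < a j \<longleftrightarrow> i < j" if "i \<le> k" "j \<le> k" for i j
    unfolding a_def using strict_sorted_nth_less_iff[OF sorted_L] that len_L by simp
  have a_range: "0 \<le> a i \<and> a i \<le> 1" if "i \<le> k" for i
    using nth_mem[of i L] that len_L set_L S_def unfolding a_def by auto
  have a_surj: "\<exists>i\<le>k. a i = b" if "b \<in> set L" for b
    using that len_L unfolding a_def in_set_conv_nth by (metis less_Suc_eq_le)
  have a0: "a 0 = 0"
  proof -
    obtain i where "i \<le> k" "a i = 0" using a_surj set_L S_def by auto
    then show ?thesis using a_less_iff[of 0 i] a_range[of 0] by (cases i) auto
  qed
  have ak: "a k = 1"
  proof -
    obtain i where "i \<le> k" "a i = 1" using a_surj set_L S_def by auto
    then show ?thesis using a_less_iff[of i k] a_range[of k] by (cases "i = k") auto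
  qed
  have a_mono: "\<forall>i<k. a i < a (Suc i)" using a_less_iff by simp
  have pieces: "\<forall>i<k. \<forall>x. a i \<le> x \<and> x < a (Suc i) \<longrightarrow> f x = frac (x + c i)"
  proof (intro allI impI)
    fix i x assume i: "i < k" and x: "a i \<le> x \<and> x < a (Suc i)"
    have "F \<inter> {a i<..x} = {}"
    proof (rule ccontr)
      assume "F \<inter> {a i<..x} \<noteq> {}"
      then obtain b where b: "b \<in> F" "a i < b" "b \<le> x" by auto
      then have "b \<in> set L" using set_L S_def a_range[of i] a_range[of "Suc i"] i x by auto
      then obtain j where "j \<le> k" "a j = b" using a_surj by blast
      then show False using a_less_iff[of i j] a_less_iff[of j "Suc i"] b i x by auto
    qed
    then have "f x - x = c i"
      using step_breaksD[OF F, of "a i" x] a_range[of i] a_range[of "Suc i"] i x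
      unfolding c_def by auto
    moreover have "f x \<in> {0..<1}"
      using bij_betw_apply[OF bij] a_range[of i] a_range[of "Suc i"] i x by auto
    ultimately show "f x = frac (x + c i)" by (simp add: frac_eq)
  qed
  then have "\<exists>k a c. a 0 = 0 \<and> a k = 1 \<and> (\<forall>i<k. a i < a (Suc i)) \<and>
      (\<forall>i<k. \<forall>x. a i \<le> x \<and> x < a (Suc i) \<longrightarrow> f x = frac (x + c i))"
    using a0 ak a_mono by blast
  then show ?thesis unfolding IET_def using bij outside by blast
qed


lemma IET_bij_betw: "IET f \<Longrightarrow> bij_betw f {0..<1} {0..<1}"
  unfolding IET_def by (elim conjE)

lemma IET_fixes_outside: "IET f \<Longrightarrow> x \<notin> {0..<1} \<Longrightarrow> f x = x"
  unfolding IET_def by (elim conjE) simp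

lemma IET_into: "IET g \<Longrightarrow> x \<in> {0..<1} \<Longrightarrow> g x \<in> {0..<1}"
  by (rule bij_betw_apply[OF IET_bij_betw])

lemma IET_inj_on: "IET g \<Longrightarrow> inj_on g {0..<1}"
  by (rule bij_betw_imp_inj_on[OF IET_bij_betw])

lemma IET_bij: assumes "IET g" shows "bij g"
proof -
  have "bij_betw g (- {0..<1}) (- {0..<1}) \<longleftrightarrow> bij_betw id (- {0..<1}) (- {0..<1::real})"
    by (rule bij_betw_cong) (simp add: IET_fixes_outside[OF assms])
  then have "bij_betw g (- {0..<1}) (- {0..<1})" by simp
  from bij_betw_combine[OF IET_bij_betw[OF assms] this] show ?thesis by simp
qed

lemma IET_id: "IET id"
proof (rule piecewise_translation_IET)
  show "piecewise_translation id"
    by (rule piecewise_translationI[of "{}"]) (simp_all add: step_breaks_def)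
qed simp_all

lemma IET_comp:
  assumes f: "IET f" and g: "IET g"
  shows "IET (f \<circ> g)"
proof (rule piecewise_translation_IET)
  show "bij_betw (f \<circ> g) {0..<1} {0..<1}"
    by (rule bij_betw_trans[OF IET_bij_betw[OF g] IET_bij_betw[OF f]])
  show "(f \<circ> g) x = x" if "x \<notin> {0..<1}" for x
    using that by (simp add: IET_fixes_outside[OF f] IET_fixes_outside[OF g])
  obtain F where F: "finite F" "step_breaks F (\<lambda>x. f x - x)"
    using IET_piecewise_translation[OF f] by (rule piecewise_translationE)
  obtain G where G: "finite G" "step_breaks G (\<lambda>x. g x - x)"
    using IET_piecewise_translation[OF g] by (rule piecewise_translationE)
  have "step_breaks ((G \<union> (g -` F \<inter> {0..<1})) \<union> G) (\<lambda>x. (f (g x) - g x) + (g x - x))"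
    by (rule step_breaks_combine[OF step_breaks_comp[OF G(2) IET_into[OF g] F(2)] G(2)])
  moreover have "finite ((G \<union> (g -` F \<inter> {0..<1})) \<union> G)"
    using F(1) G(1) IET_inj_on[OF g] by (simp add: finite_vimage_IntI)
  ultimately show "piecewise_translation (f \<circ> g)"
    by (intro piecewise_translationI) simp_all
qed

text \<open>The inverse translates by the negated amounts, and it can only break at the points
  q + c, where q is a break of g (or 1) and c one of the finitely many translation amounts of g.\<close>
lemma IET_inv:
  assumes g: "IET g"
  shows "IET (inv_into UNIV g)"
proof (rule piecewise_translation_IET)
  define h where "h = inv_into UNIV g"
  have inj_g: "inj g" using IET_bij[OF g] by (rule bij_is_inj)
  have img: "g ` {0..<1} = {0..<1}" using IET_bij_betw[OF g] by (rule bij_betw_imp_surj_on)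
  have bij_h: "bij_betw h {0..<1} {0..<1}"
    unfolding h_def by (rule bij_betw_inv_into_subset[OF IET_bij[OF g] subset_UNIV img])
  then show "bij_betw (inv_into UNIV g) {0..<1} {0..<1}" unfolding h_def .
  show "inv_into UNIV g x = x" if "x \<notin> {0..<1}" for x
    using inv_f_eq[OF inj_g IET_fixes_outside[OF g that]] .
  have h_into: "h u \<in> {0..<1}" if "u \<in> {0..<1}" for u
    using bij_betw_apply[OF bij_h that] .
  have g_h: "g (h u) = u" for u
    unfolding h_def by (rule surj_f_inv_f[OF bij_is_surj[OF IET_bij[OF g]]])
  obtain F where F: "finite F" "step_breaks F (\<lambda>x. g x - x)"
    using IET_piecewise_translation[OF g] by (rule piecewise_translationE)
  define C where "C = (\<lambda>x. g x - x) ` {0..<1}"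
  have "finite C" unfolding C_def by (rule finite_step_values[OF F])
  define B where "B = (\<lambda>(b, c). b + c) ` (insert 1 F \<times> C)"
  have "step_breaks B (\<lambda>v. h v - v)"
  proof (rule step_breaksI)
    fix u v :: real
    assume uv: "0 \<le> u" "u \<le> v" "v < 1" and no_break: "B \<inter> {u<..v} = {}"
    define x where "x = h u"
    define c where "c = g x - x"
    have x: "x \<in> {0..<1}" "g x = u" using h_into g_h uv unfolding x_def by auto
    obtain q where q: "q \<in> insert 1 F" "x < q" "q \<le> 1" "\<And>t. t < q \<Longrightarrow> F \<inter> {x<..t} = {}"
      using next_break[OF F(1), of x] x by auto
    have shift: "g t = t + c" if "x \<le> t" "t < q" for t
      using step_breaksD[OF F(2), of x t] q(3,4) x that unfolding c_def by simp
    have "c \<in> C" unfolding C_def c_def using x(1) by (rule imageI)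
    then have "q + c \<in> B" unfolding B_def using q(1) by force
    moreover have "u < q + c" using x q unfolding c_def by simp
    ultimately have "v < q + c" using no_break by force
    then have "g (v - c) = v" using shift[of "v - c"] uv x unfolding c_def by simp
    then have "h v = v - c" unfolding h_def using inv_f_eq[OF inj_g] by blast
    then show "h v - v = h u - u" using x unfolding c_def x_def by simp
  qed
  moreover have "finite B" unfolding B_def using F(1) \<open>finite C\<close> by simp
  ultimately show "piecewise_translation (inv_into UNIV g)"
    unfolding h_def by (intro piecewise_translationI)
qed

lemma centralizer_IET: "g \<in> centralizer r \<Longrightarrow> IET g"
  unfolding centralizer_def by simp

lemma centralizer_commute: "g \<in> centralizer r \<Longrightarrow> r (g x) = g (r x)"
  unfolding centralizer_def by (simp add: fun_eq_iff)

lemma centralizer_commute_funpow: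
  assumes "g \<in> centralizer r" shows "g ((r ^^ j) x) = (r ^^ j) (g x)"
  by (induction j) (simp_all add: centralizer_commute[OF assms, symmetric])

lemma id_in_centralizer: "id \<in> centralizer r"
  unfolding centralizer_def using IET_id by simp

lemma comp_in_centralizer:
  assumes "f \<in> centralizer r" "g \<in> centralizer r"
  shows "f \<circ> g \<in> centralizer r"
  using assms IET_comp unfolding centralizer_def by (simp add: fun_eq_iff)

lemma inv_in_centralizer:
  assumes "g \<in> centralizer r"
  shows "inv_into UNIV g \<in> centralizer r"
proof -
  have g: "IET g" using assms by (rule centralizer_IET)
  have "r (inv_into UNIV g y) = inv_into UNIV g (r y)" for y
  proof -
    have "g (r (inv_into UNIV g y)) = r y"
      using centralizer_commute[OF assms] surj_f_inv_f[OF bij_is_surj[OF IET_bij[OF g]]] by metis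
    then show ?thesis using inv_f_eq[OF bij_is_inj[OF IET_bij[OF g]]] by metis
  qed
  then show ?thesis unfolding centralizer_def using IET_inv[OF g] by (simp add: fun_eq_iff)
qed

lemma group_centralizer_group: "group (centralizer_group r)"
proof (rule groupI)
  fix g assume "g \<in> carrier (centralizer_group r)"
  then have g: "g \<in> centralizer r" by (simp add: centralizer_group_def)
  have "inv_into UNIV g \<circ> g = id" using bij_is_inj[OF IET_bij[OF centralizer_IET[OF g]]] by simp
  then show "\<exists>h\<in>carrier (centralizer_group r). h \<otimes>\<^bsub>centralizer_group r\<^esub> g = \<one>\<^bsub>centralizer_group r\<^esub>"
    using inv_in_centralizer[OF g] by (intro bexI[of _ "inv_into UNIV g"]) (simp_all add: centralizer_group_def)
qed (simp_all add: centralizer_group_def comp_in_centralizer id_in_centralizer comp_assoc)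

lemma centralizer_group_inv:
  assumes "g \<in> centralizer r"
  shows "inv\<^bsub>centralizer_group r\<^esub> g = inv_into UNIV g"
proof (rule group.inv_equality[OF group_centralizer_group])
  show "inv_into UNIV g \<otimes>\<^bsub>centralizer_group r\<^esub> g = \<one>\<^bsub>centralizer_group r\<^esub>"
    using bij_is_inj[OF IET_bij[OF centralizer_IET[OF assms]]] by (simp add: centralizer_group_def)
qed (simp_all add: centralizer_group_def assms inv_in_centralizer)

section \<open>Cell and offset coordinates\<close>

text \<open>A point z of [0,1) with cell index i lies in I_(i+1); r_(1/n) adds 1 to the cell index
  modulo n and keeps the offset.\<close>
definition cell :: "nat \<Rightarrow> real \<Rightarrow> int" where
  "cell n z = \<lfloor>real n * z\<rfloor>"

definition offset :: "nat \<Rightarrow> real \<Rightarrow> real" where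
  "offset n z = z - of_int (cell n z) / real n"

definition cell_point :: "nat \<Rightarrow> int \<Rightarrow> real \<Rightarrow> real" where
  "cell_point n i \<rho> = of_int i / real n + \<rho>"

lemma cell_point_cell_offset: "cell_point n (cell n z) (offset n z) = z"
  unfolding cell_point_def offset_def by simp

lemma eq_if_cell_offset_eq: "cell n z = cell n w \<Longrightarrow> offset n z = offset n w \<Longrightarrow> z = w"
  by (metis cell_point_cell_offset)

context
  fixes n :: nat
  assumes n: "n > 0"
begin

lemma cell_bounds:
  assumes "z \<in> {0..<1}" shows "0 \<le> cell n z" "cell n z < int n"
proof -
  have "0 \<le> real n * z" "real n * z < real n" using assms n by auto
  then show "0 \<le> cell n z" "cell n z < int n" unfolding cell_def by (simp, linarith)
qed

lemma offset_bounds: "0 \<le> offset n z" "offset n z < 1 / real n"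
proof -
  have "of_int (cell n z) \<le> real n * z" "real n * z < of_int (cell n z) + 1"
    unfolding cell_def by linarith+
  moreover have "offset n z = (real n * z - of_int (cell n z)) / real n"
    unfolding offset_def using n by (simp add: field_simps)
  ultimately show "0 \<le> offset n z" "offset n z < 1 / real n"
    using n by (simp_all add: divide_strict_right_mono)
qed

lemma
  assumes "0 \<le> \<rho>" "\<rho> < 1 / real n"
  shows cell_cell_point: "cell n (cell_point n i \<rho>) = i"
    and offset_cell_point: "offset n (cell_point n i \<rho>) = \<rho>"
proof -
  have "real n * cell_point n i \<rho> = of_int i + real n * \<rho>"
    unfolding cell_point_def using n by (simp add: field_simps)
  moreover have "0 \<le> real n * \<rho>" "real n * \<rho> < 1" using assms n by (simp_all add: field_simps)
  ultimately show "cell n (cell_point n i \<rho>) = i" unfolding cell_def by (simp add: floor_eq_iff)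
  then show "offset n (cell_point n i \<rho>) = \<rho>" unfolding offset_def cell_point_def by simp
qed

lemma cell_point_in_unit:
  assumes "0 \<le> i" "i < int n" "0 \<le> \<rho>" "\<rho> < 1 / real n"
  shows "cell_point n i \<rho> \<in> {0..<1}"
proof -
  have "of_int i + 1 \<le> real n" using assms by linarith
  then have "of_int i / real n + 1 / real n \<le> 1" using n by (simp add: field_simps)
  then show ?thesis unfolding cell_point_def using assms by auto
qed

lemma offset_add_multiple: "offset n (z + of_int k / real n) = offset n z"
proof -
  have "real n * (z + of_int k / real n) = real n * z + of_int k" using n by (simp add: field_simps)
  then have "cell n (z + of_int k / real n) = cell n z + k" unfolding cell_def by simp
  then show ?thesis unfolding offset_def using n by (simp add: field_simps)
qed

lemma offset_frac: "offset n (frac z) = offset n z"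
  using offset_add_multiple[of z "- \<lfloor>z\<rfloor> * int n"] n by (simp add: frac_def)

lemma rot_cell_point:
  assumes "0 \<le> i" "i < int n" "0 \<le> \<rho>" "\<rho> < 1 / real n"
  shows "rot n (cell_point n i \<rho>) = cell_point n ((i + 1) mod int n) \<rho>"
proof -
  have "cell_point n i \<rho> + 1 / real n = cell_point n (i + 1) \<rho>"
    unfolding cell_point_def using n by (simp add: field_simps)
  then have rot_eq: "rot n (cell_point n i \<rho>) = frac (cell_point n (i + 1) \<rho>)"
    unfolding rot_def using cell_point_in_unit[OF assms] by simp
  show ?thesis
  proof (cases "i + 1 < int n")
    case True
    then have "cell_point n (i + 1) \<rho> \<in> {0..<1}" using cell_point_in_unit assms by simp
    then show ?thesis using True assms rot_eq by (simp add: frac_eq)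
  next
    case False
    then have "i + 1 = int n" using assms by simp
    then have "cell_point n (i + 1) \<rho> = \<rho> + 1" unfolding cell_point_def using n by simp
    moreover have "frac (1 + \<rho>) = \<rho>"
      using assms(3,4) n by (simp add: add.commute[of 1] frac_1_eq frac_eq divide_le_eq order_less_le_trans)
    ultimately show ?thesis using \<open>i + 1 = int n\<close> rot_eq by (simp add: cell_point_def)
  qed
qed

lemma rot_funpow:
  assumes "z \<in> {0..<1}"
  shows "(rot n ^^ j) z = cell_point n ((cell n z + int j) mod int n) (offset n z)"
proof (induction j)
  case 0
  then show ?case using cell_bounds[OF assms] by (simp add: cell_point_cell_offset)
next
  case (Suc j)
  have "(rot n ^^ Suc j) z = rot n (cell_point n ((cell n z + int j) mod int n) (offset n z))"
    using Suc by simp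
  also have "\<dots> = cell_point n (((cell n z + int j) mod int n + 1) mod int n) (offset n z)"
    using n offset_bounds by (intro rot_cell_point) simp_all
  also have "((cell n z + int j) mod int n + 1) mod int n = (cell n z + int (Suc j)) mod int n"
    by (simp add: mod_simps ac_simps)
  finally show ?case .
qed

lemma rot_funpow_offset:
  assumes "z \<in> {0..<1}"
  shows "(rot n ^^ j) z \<in> {0..<1}" "offset n ((rot n ^^ j) z) = offset n z"
proof -
  have "0 \<le> (cell n z + int j) mod int n" "(cell n z + int j) mod int n < int n" using n by simp_all
  then show "(rot n ^^ j) z \<in> {0..<1}" "offset n ((rot n ^^ j) z) = offset n z"
    unfolding rot_funpow[OF assms]
    using cell_point_in_unit offset_bounds offset_cell_point[OF offset_bounds] by blast+
qed

lemma same_offset_same_orbit: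
  assumes "a \<in> {0..<1}" "b \<in> {0..<1}" "offset n a = offset n b"
  shows "\<exists>j. b = (rot n ^^ j) a"
proof
  define j where "j = nat ((cell n b - cell n a) mod int n)"
  have "(cell n a + int j) mod int n = (cell n a + (cell n b - cell n a)) mod int n"
    unfolding j_def using n by (simp add: mod_simps)
  also have "\<dots> = cell n b" using cell_bounds[OF assms(2)] by simp
  finally show "b = (rot n ^^ j) a"
    unfolding rot_funpow[OF assms(1)] assms(3) by (simp add: cell_point_cell_offset)
qed

text \<open>An element of C(r_(1/n)) maps orbits of r_(1/n) to orbits, and the orbits are exactly
  the sets of points with a common offset.\<close>
lemma centralizer_respects_offset:
  assumes g: "g \<in> centralizer (rot n)" and "a \<in> {0..<1}" "b \<in> {0..<1}" "offset n a = offset n b"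
  shows "offset n (g a) = offset n (g b)"
proof -
  obtain j where "b = (rot n ^^ j) a" using same_offset_same_orbit assms(2-4) by blast
  then have "g b = (rot n ^^ j) (g a)" using centralizer_commute_funpow[OF g] by simp
  then show ?thesis using rot_funpow_offset IET_into[OF centralizer_IET[OF g] assms(2)] by simp
qed

lemma P_set_iff_preserves_offset:
  "g \<in> P_set n \<longleftrightarrow> g \<in> centralizer (rot n) \<and> (\<forall>x\<in>{0..<1}. offset n (g x) = offset n x)"
proof -
  have "(\<exists>k::int. g x = frac (x + of_int k / real n)) \<longleftrightarrow> offset n (g x) = offset n x"
    if "g \<in> centralizer (rot n)" "x \<in> {0..<1}" for g x
  proof
    assume "\<exists>k::int. g x = frac (x + of_int k / real n)"
    then show "offset n (g x) = offset n x" using offset_frac offset_add_multiple by auto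
  next
    assume offset_eq: "offset n (g x) = offset n x"
    have gx: "g x \<in> {0..<1}" using IET_into[OF centralizer_IET] that .
    have "x + of_int (cell n (g x) - cell n x) / real n = g x"
      using cell_point_cell_offset[of n x] cell_point_cell_offset[of n "g x"] offset_eq
      unfolding cell_point_def using n by (simp add: field_simps)
    then show "\<exists>k::int. g x = frac (x + of_int k / real n)"
      using gx by (intro exI[of _ "cell n (g x) - cell n x"]) (simp add: frac_eq)
  qed
  then show ?thesis unfolding P_set_def by auto
qed

lemma step_breaks_cell: "step_breaks ((\<lambda>j. of_int j / real n) ` {0..int n}) (cell n)"
proof (rule step_breaksI)
  fix x y :: real
  assume x: "0 \<le> x" "x \<le> y" "y < 1" and no_break: "(\<lambda>j. of_int j / real n) ` {0..int n} \<inter> {x<..y} = {}"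
  have "\<lfloor>real n * x\<rfloor> = \<lfloor>real n * y\<rfloor>"
  proof (rule floor_eq_if_no_int_between)
    fix m :: int
    show "\<not> (real n * x < of_int m \<and> of_int m \<le> real n * y)"
    proof
      assume m: "real n * x < of_int m \<and> of_int m \<le> real n * y"
      then have "of_int m / real n \<in> {x<..y}" using n by (simp add: field_simps)
      moreover have "m \<in> {0..int n}"
      proof -
        have "0 \<le> real n * x" "real n * y \<le> real n" using n x by simp_all
        then have "0 < real_of_int m" "real_of_int m \<le> real n" using m by linarith+
        then show ?thesis by simp
      qed
      ultimately show False using no_break by blast
    qed
  qed (use x n in simp)
  then show "cell n y = cell n x" unfolding cell_def by simp
qed

lemma Iint_iff_cell: "z \<in> Iint n i \<longleftrightarrow> cell n z = int i - 1"
proof -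
  have "z \<in> Iint n i \<longleftrightarrow> real i - 1 \<le> real n * z \<and> real n * z < real i"
    unfolding Iint_def using n by (simp add: field_simps)
  also have "\<dots> \<longleftrightarrow> cell n z = int i - 1" unfolding cell_def by (simp add: floor_eq_iff)
  finally show ?thesis .
qed

end

section \<open>The decomposition\<close>

text \<open>The E^n_Delta-factor e of g in the decomposition g = p \<circ> e with p \<in> P_n.\<close>
definition diagonal_part :: "nat \<Rightarrow> (real \<Rightarrow> real) \<Rightarrow> real \<Rightarrow> real" where
  "diagonal_part n g x = (if x \<in> {0..<1} then cell_point n (cell n x) (offset n (g x)) else x)"

context
  fixes n :: nat and g :: "real \<Rightarrow> real"
  assumes n: "n > 0" and g: "g \<in> centralizer (rot n)"
begin

lemma diagonal_part_in_unit:
  assumes x: "x \<in> {0..<1}"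
  shows "diagonal_part n g x \<in> {0..<1}"
    and "cell n (diagonal_part n g x) = cell n x"
    and "offset n (diagonal_part n g x) = offset n (g x)"
proof -
  have e: "diagonal_part n g x = cell_point n (cell n x) (offset n (g x))"
    using x by (simp add: diagonal_part_def)
  show "diagonal_part n g x \<in> {0..<1}"
    unfolding e by (rule cell_point_in_unit[OF n cell_bounds[OF n x] offset_bounds[OF n]])
  show "cell n (diagonal_part n g x) = cell n x"
    unfolding e by (rule cell_cell_point[OF n offset_bounds[OF n]])
  show "offset n (diagonal_part n g x) = offset n (g x)"
    unfolding e by (rule offset_cell_point[OF n offset_bounds[OF n]])
qed

lemma inj_on_diagonal_part: "inj_on (diagonal_part n g) {0..<1}"
proof (rule inj_onI)
  fix x y assume x: "x \<in> {0..<1}" and y: "y \<in> {0..<1}" and eq: "diagonal_part n g x = diagonal_part n g y"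
  have "offset n (g x) = offset n (g y)" using diagonal_part_in_unit(3)[OF x] diagonal_part_in_unit(3)[OF y] eq by simp
  then have "offset n (inv_into UNIV g (g x)) = offset n (inv_into UNIV g (g y))"
    using centralizer_respects_offset[OF n inv_in_centralizer[OF g]] IET_into[OF centralizer_IET[OF g]] x y
    by blast
  then have "offset n x = offset n y" using bij_is_inj[OF IET_bij[OF centralizer_IET[OF g]]] by simp
  moreover have "cell n x = cell n y" using diagonal_part_in_unit(2)[OF x] diagonal_part_in_unit(2)[OF y] eq by simp
  ultimately show "x = y" by (rule eq_if_cell_offset_eq[rotated])
qed

lemma diagonal_part_onto:
  assumes z: "z \<in> {0..<1}"
  shows "\<exists>x\<in>{0..<1}. diagonal_part n g x = z"
proof
  have g_IET: "IET g" using g by (rule centralizer_IET)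
  have base: "cell_point n 0 (offset n z) \<in> {0..<1}"
    by (rule cell_point_in_unit[OF n]) (simp_all add: n offset_bounds[OF n])
  define w where "w = inv_into UNIV g (cell_point n 0 (offset n z))"
  have w: "w \<in> {0..<1}" unfolding w_def using IET_into[OF IET_inv[OF g_IET] base] .
  have g_w: "g w = cell_point n 0 (offset n z)"
    unfolding w_def by (rule surj_f_inv_f[OF bij_is_surj[OF IET_bij[OF g_IET]]])
  define x where "x = cell_point n (cell n z) (offset n w)"
  show x: "x \<in> {0..<1}" unfolding x_def using cell_bounds[OF n z] offset_bounds[OF n] by (rule cell_point_in_unit[OF n])
  have "offset n (g x) = offset n (g w)"
    using centralizer_respects_offset[OF n g x w] offset_cell_point[OF n offset_bounds[OF n]] unfolding x_def by simp
  also have "\<dots> = offset n z" unfolding g_w using offset_cell_point[OF n offset_bounds[OF n]] .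
  finally show "diagonal_part n g x = z"
    using x cell_cell_point[OF n offset_bounds[OF n]] unfolding diagonal_part_def x_def
    by (simp add: cell_point_cell_offset)
qed

lemma bij_betw_diagonal_part: "bij_betw (diagonal_part n g) {0..<1} {0..<1}"
  unfolding bij_betw_def using inj_on_diagonal_part diagonal_part_in_unit(1) diagonal_part_onto by blast

lemma piecewise_translation_diagonal_part: "piecewise_translation (diagonal_part n g)"
proof -
  have g_IET: "IET g" using g by (rule centralizer_IET)
  obtain G where G: "finite G" "step_breaks G (\<lambda>x. g x - x)"
    using IET_piecewise_translation[OF g_IET] by (rule piecewise_translationE)
  define J where "J = (\<lambda>j. of_int j / real n) ` {0..int n}"
  have J: "step_breaks J (cell n)" unfolding J_def by (rule step_breaks_cell[OF n])
  have "step_breaks ((G \<union> (G \<union> (g -` J \<inter> {0..<1}))) \<union> J)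
      (\<lambda>x. ((g x - x) - of_int (cell n (g x)) / real n) + of_int (cell n x) / real n)"
    by (intro step_breaks_combine G(2) J step_breaks_comp[OF G(2) IET_into[OF g_IET]])
  then have "step_breaks ((G \<union> (G \<union> (g -` J \<inter> {0..<1}))) \<union> J) (\<lambda>x. diagonal_part n g x - x)"
    by (rule step_breaks_cong[rotated]) (simp add: diagonal_part_def cell_point_def offset_def)
  moreover have "finite ((G \<union> (G \<union> (g -` J \<inter> {0..<1}))) \<union> J)"
    unfolding J_def using G(1) IET_inj_on[OF g_IET] by (simp add: finite_vimage_IntI)
  ultimately show ?thesis by (intro piecewise_translationI)
qed

lemma diagonal_part_in_centralizer: "diagonal_part n g \<in> centralizer (rot n)"
proof -
  have "IET (diagonal_part n g)"
    by (rule piecewise_translation_IET[OF bij_betw_diagonal_part _ piecewise_translation_diagonal_part])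
      (auto simp: diagonal_part_def)
  moreover have "rot n (diagonal_part n g x) = diagonal_part n g (rot n x)" for x
  proof (cases "x \<in> {0..<1}")
    case x: True
    have gx: "g x \<in> {0..<1}" using IET_into[OF centralizer_IET[OF g] x] .
    have rot_x: "rot n x = cell_point n ((cell n x + 1) mod int n) (offset n x)"
      using rot_funpow[OF n x, of 1] by simp
    have "offset n (g (rot n x)) = offset n (g x)"
      using centralizer_commute[OF g, of x] rot_funpow_offset(2)[OF n gx, of 1] by simp
    moreover have "cell n (rot n x) = (cell n x + 1) mod int n"
      unfolding rot_x by (rule cell_cell_point[OF n offset_bounds[OF n]])
    moreover have "rot n x \<in> {0..<1}" using rot_funpow_offset(1)[OF n x, of 1] by simp
    ultimately show ?thesis
      using x cell_bounds[OF n x] offset_bounds[OF n] unfolding diagonal_part_def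
      by (simp add: rot_cell_point[OF n])
  next
    case False
    then have "rot n x = x" "diagonal_part n g x = x" by (auto simp: rot_def diagonal_part_def)
    then show ?thesis by simp
  qed
  ultimately show ?thesis unfolding centralizer_def by (simp add: fun_eq_iff)
qed

lemma diagonal_part_in_E_Delta: "diagonal_part n g \<in> E_Delta n"
proof -
  have "diagonal_part n g ` Iint n i = Iint n i" if i: "i \<in> {1..n}" for i
  proof -
    have in_unit: "z \<in> {0..<1}" if "z \<in> Iint n i" for z
    proof -
      have "0 \<le> cell n z" "cell n z < int n" using that i Iint_iff_cell[OF n] by auto
      then show ?thesis using cell_point_in_unit[OF n _ _ offset_bounds[OF n]] cell_point_cell_offset by metis
    qed
    show ?thesis
    proof
      show "diagonal_part n g ` Iint n i \<subseteq> Iint n i"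
        using in_unit diagonal_part_in_unit(2) Iint_iff_cell[OF n] by auto
      show "Iint n i \<subseteq> diagonal_part n g ` Iint n i"
      proof
        fix z assume z: "z \<in> Iint n i"
        obtain x where x: "x \<in> {0..<1}" "diagonal_part n g x = z" using diagonal_part_onto in_unit[OF z] by blast
        then have "x \<in> Iint n i" using z diagonal_part_in_unit(2)[OF x(1)] Iint_iff_cell[OF n] by simp
        then show "z \<in> diagonal_part n g ` Iint n i" using x(2) by blast
      qed
    qed
  qed
  then show ?thesis unfolding E_Delta_def using diagonal_part_in_centralizer by simp
qed

end

context
  fixes n :: nat
  assumes n: "n > 0"
begin

lemma P_set_subgroup: "subgroup (P_set n) (centralizer_group (rot n))"
proof (rule group.subgroupI[OF group_centralizer_group])
  show "P_set n \<subseteq> carrier (centralizer_group (rot n))"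
    unfolding P_set_def centralizer_group_def by auto
  show "P_set n \<noteq> {}"
    using P_set_iff_preserves_offset[OF n, of id] id_in_centralizer by auto
next
  fix p assume "p \<in> P_set n"
  then have p: "p \<in> centralizer (rot n)" "\<And>x. x \<in> {0..<1} \<Longrightarrow> offset n (p x) = offset n x"
    using P_set_iff_preserves_offset[OF n] by auto
  have p_IET: "IET p" using p(1) by (rule centralizer_IET)
  have "offset n (inv_into UNIV p y) = offset n y" if "y \<in> {0..<1}" for y
    using p(2)[OF IET_into[OF IET_inv[OF p_IET] that]]
      surj_f_inv_f[OF bij_is_surj[OF IET_bij[OF p_IET]]] by simp
  then show "inv\<^bsub>centralizer_group (rot n)\<^esub> p \<in> P_set n"
    using P_set_iff_preserves_offset[OF n] inv_in_centralizer[OF p(1)] centralizer_group_inv[OF p(1)]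
    by simp
next
  fix p q assume "p \<in> P_set n" "q \<in> P_set n"
  then have p: "p \<in> centralizer (rot n)" "\<And>x. x \<in> {0..<1} \<Longrightarrow> offset n (p x) = offset n x"
    and q: "q \<in> centralizer (rot n)" "\<And>x. x \<in> {0..<1} \<Longrightarrow> offset n (q x) = offset n x"
    using P_set_iff_preserves_offset[OF n] by auto
  have "offset n (p (q x)) = offset n x" if "x \<in> {0..<1}" for x
    using p(2)[OF IET_into[OF centralizer_IET[OF q(1)] that]] q(2)[OF that] by simp
  then show "p \<otimes>\<^bsub>centralizer_group (rot n)\<^esub> q \<in> P_set n"
    using P_set_iff_preserves_offset[OF n] comp_in_centralizer[OF p(1) q(1)]
    by (simp add: centralizer_group_def)
qed

lemma P_set_normal: "P_set n \<lhd> centralizer_group (rot n)"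
proof (rule group.normal_inv_iff[OF group_centralizer_group, THEN iffD2], intro conjI ballI)
  show "subgroup (P_set n) (centralizer_group (rot n))" by (rule P_set_subgroup)
  fix g p assume "g \<in> carrier (centralizer_group (rot n))" "p \<in> P_set n"
  then have g: "g \<in> centralizer (rot n)" and p: "p \<in> centralizer (rot n)"
    and p_offset: "\<And>x. x \<in> {0..<1} \<Longrightarrow> offset n (p x) = offset n x"
    using P_set_iff_preserves_offset[OF n] by (auto simp: centralizer_group_def)
  have g_IET: "IET g" using g by (rule centralizer_IET)
  have "offset n (g (p (inv_into UNIV g y))) = offset n y" if y: "y \<in> {0..<1}" for y
  proof -
    define x where "x = inv_into UNIV g y"
    have x: "x \<in> {0..<1}" unfolding x_def using IET_into[OF IET_inv[OF g_IET] y] .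
    have "offset n (g (p x)) = offset n (g x)"
      using centralizer_respects_offset[OF n g IET_into[OF centralizer_IET[OF p] x] x] p_offset[OF x] .
    then show ?thesis
      using surj_f_inv_f[OF bij_is_surj[OF IET_bij[OF g_IET]]] unfolding x_def by simp
  qed
  moreover have "g \<circ> p \<circ> inv_into UNIV g \<in> centralizer (rot n)"
    using comp_in_centralizer[OF comp_in_centralizer[OF g p] inv_in_centralizer[OF g]] .
  ultimately show "g \<otimes>\<^bsub>centralizer_group (rot n)\<^esub> p \<otimes>\<^bsub>centralizer_group (rot n)\<^esub>
      inv\<^bsub>centralizer_group (rot n)\<^esub> g \<in> P_set n"
    using P_set_iff_preserves_offset[OF n] centralizer_group_inv[OF g]
    by (simp add: centralizer_group_def)
qed

lemma P_set_Int_E_Delta: "P_set n \<inter> E_Delta n = {id}"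
proof
  show "{id} \<subseteq> P_set n \<inter> E_Delta n"
    using P_set_iff_preserves_offset[OF n] id_in_centralizer unfolding E_Delta_def by simp
  show "P_set n \<inter> E_Delta n \<subseteq> {id}"
  proof
    fix g assume "g \<in> P_set n \<inter> E_Delta n"
    then have g: "g \<in> centralizer (rot n)" and g_offset: "\<And>x. x \<in> {0..<1} \<Longrightarrow> offset n (g x) = offset n x"
      and g_Iint: "\<And>i. i \<in> {1..n} \<Longrightarrow> g ` Iint n i = Iint n i"
      using P_set_iff_preserves_offset[OF n] unfolding E_Delta_def by auto
    have "g x = x" for x
    proof (cases "x \<in> {0..<1}")
      case x: True
      define i where "i = nat (cell n x) + 1"
      have i: "i \<in> {1..n}" "x \<in> Iint n i"
        unfolding i_def Iint_iff_cell[OF n] using cell_bounds[OF n x] by auto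
      then have "g x \<in> Iint n i" using g_Iint by blast
      then have "cell n (g x) = cell n x" using i(2) Iint_iff_cell[OF n] by simp
      then show ?thesis using g_offset[OF x] by (rule eq_if_cell_offset_eq)
    qed (rule IET_fixes_outside[OF centralizer_IET[OF g]])
    then show "g \<in> {id}" by (simp add: fun_eq_iff)
  qed
qed

lemma centralizer_eq_P_set_mult_E_Delta:
  "centralizer (rot n) = P_set n <#>\<^bsub>centralizer_group (rot n)\<^esub> E_Delta n"
proof
  show "P_set n <#>\<^bsub>centralizer_group (rot n)\<^esub> E_Delta n \<subseteq> centralizer (rot n)"
    unfolding set_mult_def P_set_def E_Delta_def centralizer_group_def
    using comp_in_centralizer by auto
  show "centralizer (rot n) \<subseteq> P_set n <#>\<^bsub>centralizer_group (rot n)\<^esub> E_Delta n"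
  proof
    fix g assume g: "g \<in> centralizer (rot n)"
    define e where "e = diagonal_part n g"
    have e: "e \<in> centralizer (rot n)" "e \<in> E_Delta n"
      unfolding e_def using diagonal_part_in_centralizer diagonal_part_in_E_Delta n g by auto
    have e_IET: "IET e" using e(1) by (rule centralizer_IET)
    define p where "p = g \<circ> inv_into UNIV e"
    have "offset n (p y) = offset n y" if y: "y \<in> {0..<1}" for y
    proof -
      define x where "x = inv_into UNIV e y"
      have x: "x \<in> {0..<1}" unfolding x_def using IET_into[OF IET_inv[OF e_IET] y] .
      have "e x = y" unfolding x_def by (rule surj_f_inv_f[OF bij_is_surj[OF IET_bij[OF e_IET]]])
      then show ?thesis using diagonal_part_in_unit(3)[OF n g x] unfolding p_def x_def e_def by simp
    qed
    then have "p \<in> P_set n"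
      using P_set_iff_preserves_offset[OF n] comp_in_centralizer[OF g inv_in_centralizer[OF e(1)]]
      unfolding p_def by simp
    moreover have "g = p \<circ> e"
      unfolding p_def using bij_is_inj[OF IET_bij[OF e_IET]] by (simp add: comp_assoc)
    ultimately show "g \<in> P_set n <#>\<^bsub>centralizer_group (rot n)\<^esub> E_Delta n"
      unfolding set_mult_def centralizer_group_def using e(2) by auto
  qed
qed

end

theorem proposition5p5:
  fixes n :: nat
  assumes "n \<ge> 2"
  shows "P_set n \<lhd> centralizer_group (rot n)
     \<and> P_set n \<inter> E_Delta n = {id}
     \<and> centralizer (rot n) = P_set n <#>\<^bsub>centralizer_group (rot n)\<^esub> E_Delta n"
proof -
  have "n > 0" using assms by simp
  then show ?thesis
    using P_set_normal P_set_Int_E_Delta centralizer_eq_P_set_mult_E_Delta by blast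
qed

end
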